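(* Let $0<k<n$ be integers such that $s^{n,k}=\frac{n(n+1)}{2k}$ is an even integer. Let $\mathcal P=[p_1,\ldots,p_k]=[2^e,p^f,\ldots]$ be an ascending partition of $n$ of size $k$ with $e,f>0$ and $p\ge 3$; that is, $p_1=\cdots=p_e=2$, $p_{e+1}=\cdots=p_{e+f}=p$, and $p_i>p$ for all $i>e+f$. Let $c=s^{n,k}-n$, $C=\{x\in[n]:x\ge c\}$, $h=|C|-2e=2n-s^{n,k}+1-2e$, $m=s^{n,k}/2$, $\overline h=\lceil h/2\rceil$ and $\underline h=\lfloor h/2\rfloor$. Suppose that \[ m+\sum_{i=c-p+1}^{c-1} i < s^{n,k}, \] and define $g=h-f$ if $f\le \underline h$, and $g=\overline h-2(f-\underline h)$ if $f>\underline h$. If either (i) $g<0$, or (ii) $g\ge 0$ and, for $q=p_{e+f+g+1}$, $\sum_{i=c-q}^{c-1} i<s^{n,k}$, then $\mathcal P$ is non-equitable.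
   Context: $[n]=\{1,2,\ldots,n\}$. An ascending partition of $n$ of size $k$ is a sequence of positive integers $[p_1,\ldots,p_k]$ with $p_1\le\cdots\le p_k$ and $\sum_i p_i=n$. Such a partition is equitable if $[n]$ can be partitioned into sets $A_1,\dots,A_k$ with $|A_i|=p_i$ such that all the sums $\sum_{x\in A_i}x$ are equal (necessarily to $s^{n,k}$). The notation $[q_1^{e_1},q_2^{e_2},\ldots]$ with $q_1<q_2<\cdots$ means the ascending partition having exactly $e_i$ parts equal to $q_i$. *)

theory Defs
  imports Complex_Main
begin

definition ascending_partition :: "nat \<Rightarrow> nat \<Rightarrow> nat list \<Rightarrow> bool" where
  "ascending_partition n k P \<longleftrightarrow>
     length P = k \<and> (\<forall>x\<in>set P. 0 < x) \<and> sorted P \<and> sum_list P = n"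

definition equitable :: "nat \<Rightarrow> nat list \<Rightarrow> bool" where
  "equitable n P \<longleftrightarrow>
     (\<exists>A :: nat \<Rightarrow> nat set.
        (\<Union>i<length P. A i) = {1..n} \<and>
        (\<forall>i<length P. \<forall>j<length P. i \<noteq> j \<longrightarrow> A i \<inter> A j = {}) \<and>
        (\<forall>i<length P. card (A i) = P ! i) \<and>
        (\<forall>i<length P. \<forall>j<length P. \<Sum>(A i) = \<Sum>(A j)))"

end

theory Submission
  imports Defs
begin

text \<open>Let the parts of an equitable partition have common sum \<open>s = 2m\<close>, put \<open>c = s - n\<close>,
  \<open>C = {c..n}\<close> and \<open>B = {m+1..n}\<close>, so that \<open>|C| = 2|B| + 1\<close>. A 2-part \<open>{x, s - x}\<close> lies
  in \<open>C\<close> and meets \<open>B\<close>. The hypothesis on \<open>p\<close> says that a \<open>p\<close>-part with at most one element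
  in \<open>C\<close>, and none in \<open>B\<close>, has sum below \<open>s\<close>; so every \<open>p\<close>-part meets \<open>B\<close> or has two
  elements in \<open>C\<close>. The hypothesis on \<open>q\<close> says that a part of size at most \<open>q\<close> lying below \<open>c\<close>
  has sum below \<open>s\<close>; so the \<open>g + 1\<close> parts following the \<open>p\<close>-parts all meet \<open>C\<close>. If \<open>a\<close>
  of the \<open>p\<close>-parts meet \<open>B\<close>, counting in \<open>B\<close> and in \<open>C\<close> gives \<open>e + a \<le> |B|\<close> and
  \<open>2e + 2f - a + (g + 1) \<le> |C|\<close>, and \<open>g\<close> is precisely the largest number of further parts
  meeting \<open>C\<close> that these two inequalities allow.\<close>

definition top_sum :: "int \<Rightarrow> nat \<Rightarrow> int" where
  "top_sum c t = (\<Sum>i\<in>{c - int t..c - 1}. i)"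

lemma double_top_sum: "2 * top_sum c t = int t * (2 * c - int t - 1)"
proof (induction t)
  case 0
  then show ?case by (simp add: top_sum_def)
next
  case (Suc t)
  have "{c - int (Suc t)..c - 1} = insert (c - int t - 1) {c - int t..c - 1}"
    by auto
  then have "top_sum c (Suc t) = (c - int t - 1) + top_sum c t"
    by (simp add: top_sum_def)
  with Suc show ?case
    by (simp add: algebra_simps)
qed

lemma top_sum_mono:
  assumes "t \<le> u" "int u \<le> c"
  shows "top_sum c t \<le> top_sum c u"
  unfolding top_sum_def using assms by (intro sum_mono2) auto

lemma sum_le_top_sum:
  fixes A :: "nat set"
  assumes "finite A" "A \<subseteq> {..<c}"
  shows "int (\<Sum>A) \<le> top_sum (int c) (card A)"
  using assms
proof (induction "card A" arbitrary: A c)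
  case 0
  then show ?case by (simp add: top_sum_def)
next
  case (Suc t)
  define x where "x = Max A"
  have "A \<noteq> {}"
    using Suc.hyps(2) by auto
  then have "x \<in> A" "x < c"
    using Suc.prems by (auto simp: x_def)
  have "A - {x} \<subseteq> {..<x}"
    using Max_ge[OF Suc.prems(1)] by (fastforce simp: x_def)
  moreover have "card (A - {x}) = t"
    using Suc.hyps(2) \<open>x \<in> A\<close> by simp
  ultimately have IH: "int (\<Sum>(A - {x})) \<le> top_sum (int x) t"
    using Suc.hyps(1) Suc.prems(1) by force
  have "2 * (top_sum (int c) (Suc t) - top_sum (int x) t - int x) = 2 * (int t + 1) * (int c - int x - 1)"
    unfolding right_diff_distrib double_top_sum by (simp add: algebra_simps)
  also have "\<dots> \<ge> 0"
    using \<open>x < c\<close> by simp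
  finally have "top_sum (int x) t + int x \<le> top_sum (int c) (Suc t)"
    by simp
  moreover have "\<Sum>A = \<Sum>(A - {x}) + x"
    using sum.remove[OF Suc.prems(1) \<open>x \<in> A\<close>, of "\<lambda>y. y"] by simp
  ultimately show ?case
    using IH Suc.hyps(2) by simp
qed

lemma sum_atLeastAtMost_card_le:
  fixes A :: "nat set"
  assumes "finite A" "0 \<notin> A"
  shows "\<Sum>{1..card A} \<le> \<Sum>A"
  using assms
proof (induction "card A" arbitrary: A)
  case 0
  then show ?case by simp
next
  case (Suc t)
  define x where "x = Max A"
  have "A \<noteq> {}"
    using Suc.hyps(2) by auto
  then have "x \<in> A"
    using Suc.prems by (simp add: x_def)
  have "A \<subseteq> {1..x}"
    using Suc.prems x_def by (auto simp: Suc_le_eq) (metis gr0I)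
  then have "Suc t \<le> x"
    using Suc.hyps(2) card_mono[of "{1..x}" A] by simp
  moreover have "\<Sum>{1..t} \<le> \<Sum>(A - {x})"
    using Suc.hyps(1)[of "A - {x}"] Suc.hyps(2)[symmetric] \<open>x \<in> A\<close> Suc.prems by simp
  moreover have "\<Sum>A = \<Sum>(A - {x}) + x"
    using sum.remove[OF Suc.prems(1) \<open>x \<in> A\<close>, of "\<lambda>y. y"] by simp
  ultimately show ?case
    using Suc.hyps(2)[symmetric] by simp
qed

definition remaining_capacity :: "int \<Rightarrow> int \<Rightarrow> int" where
  "remaining_capacity h f =
     (if f \<le> \<lfloor>real_of_int h / 2\<rfloor> then h - f
      else \<lceil>real_of_int h / 2\<rceil> - 2 * (f - \<lfloor>real_of_int h / 2\<rfloor>))"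

lemma le_remaining_capacity:
  fixes a f v K :: int
  assumes "a \<le> f" "a \<le> K" "2 * f + v \<le> 2 * K + 1 + a"
  shows "v \<le> remaining_capacity (2 * K + 1) f"
proof -
  have "\<lfloor>real_of_int (2 * K + 1) / 2\<rfloor> = K" "\<lceil>real_of_int (2 * K + 1) / 2\<rceil> = K + 1"
    by (simp_all add: floor_eq_iff ceiling_eq_iff)
  then show ?thesis
    using assms by (cases "f \<le> K") (simp_all add: remaining_capacity_def)
qed

locale equitable_partition =
  fixes n :: nat and P :: "nat list" and A :: "nat \<Rightarrow> nat set"
  assumes parts_cover: "(\<Union>i<length P. A i) = {1..n}"
    and parts_disjoint: "i < length P \<Longrightarrow> j < length P \<Longrightarrow> i \<noteq> j \<Longrightarrow> A i \<inter> A j = {}"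
    and card_part: "i < length P \<Longrightarrow> card (A i) = P ! i"
    and sums_parts_eq: "i < length P \<Longrightarrow> j < length P \<Longrightarrow> \<Sum>(A i) = \<Sum>(A j)"

lemma equitable_iff_ex_equitable_partition:
  "equitable n P \<longleftrightarrow> (\<exists>A. equitable_partition n P A)"
  unfolding equitable_def equitable_partition_def by (simp add: lessThan_iff)

context equitable_partition
begin

definition part_sum :: nat where
  "part_sum = \<Sum>(A 0)"

lemma sum_part: "i < length P \<Longrightarrow> \<Sum>(A i) = part_sum"
  unfolding part_sum_def using sums_parts_eq[of i 0] by (cases P) auto

lemma part_subset: "i < length P \<Longrightarrow> A i \<subseteq> {1..n}"
  using parts_cover by blast

lemma finite_part: "i < length P \<Longrightarrow> finite (A i)"
  using part_subset finite_subset[OF _ finite_atLeastAtMost] by blast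

lemma double_length_mult_part_sum: "2 * length P * part_sum = n * (n + 1)"
proof -
  have "\<Sum>{1..n} = (\<Sum>i<length P. \<Sum>(A i))"
    unfolding parts_cover[symmetric]
    by (rule sum.UNION_disjoint) (use finite_part parts_disjoint in auto)
  also have "\<dots> = length P * part_sum"
    using sum_part by simp
  finally have "2 * length P * part_sum = 2 * \<Sum>{1..n}"
    by simp
  also have "\<dots> = n * (n + 1)"
    using double_gauss_sum_from_Suc_0[where 'a = nat, of n] by simp
  finally show ?thesis .
qed

lemma greatest_less_part_sum:
  assumes "0 < n" and "\<forall>i<length P. 2 \<le> P ! i"
  shows "n < part_sum"
proof -
  have "n \<in> {1..n}"
    using assms(1) by simp
  then obtain i where i: "i < length P" "n \<in> A i"
    using parts_cover by blast
  have "card (A i - {n}) = P ! i - 1"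
    using i card_part by simp
  moreover have "2 \<le> P ! i"
    using assms(2) i(1) by simp
  ultimately have "A i - {n} \<noteq> {}"
    by (intro notI) simp
  then obtain y where y: "y \<in> A i" "y \<noteq> n"
    by blast
  have "n + y = \<Sum>{n, y}"
    using y(2) by simp
  also have "\<dots> \<le> part_sum"
    using sum_mono2[of "A i" "{n, y}" "\<lambda>x. x"] finite_part[OF i(1)] i(2) y(1) sum_part[OF i(1)]
    by simp
  finally show ?thesis
    using y part_subset[OF i(1)] by fastforce
qed

lemma pair_part:
  assumes "i < length P" "P ! i = 2"
  obtains x y where "A i = {x, y}" "x \<noteq> y" "x + y = part_sum" "x \<le> n" "y \<le> n"
proof -
  obtain x y where xy: "A i = {x, y}" "x \<noteq> y"
    using assms card_part by (metis card_2_iff)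
  moreover have "x + y = part_sum"
    using sum_part[OF assms(1)] xy by simp
  moreover have "x \<le> n" "y \<le> n"
    using part_subset[OF assms(1)] xy by auto
  ultimately show ?thesis
    by (rule that)
qed

lemma part_sum_less_double:
  assumes "i < length P" "P ! i = 2"
  shows "part_sum < 2 * n"
proof -
  obtain x y where "x \<noteq> y" "x + y = part_sum" "x \<le> n" "y \<le> n"
    using pair_part[OF assms] by metis
  then show ?thesis
    by linarith
qed

lemma pair_part_meets_upper_half:
  assumes "i < length P" "P ! i = 2" "part_sum = 2 * M"
  shows "A i \<inter> {M<..n} \<noteq> {}" "A i \<subseteq> {part_sum - n..n}"
proof -
  obtain x y where "A i = {x, y}" "x \<noteq> y" "x + y = 2 * M" "x \<le> n" "y \<le> n"
    using pair_part assms by metis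
  then show "A i \<inter> {M<..n} \<noteq> {}" "A i \<subseteq> {part_sum - n..n}"
    using assms(3) by (cases "x < y"; force)+
qed

lemma card_parts_meeting_le:
  assumes "I \<union> J \<subseteq> {..<length P}" "I \<inter> J = {}" "finite Z"
    and "\<forall>i\<in>I. 2 \<le> card (A i \<inter> Z)" and "\<forall>j\<in>J. A j \<inter> Z \<noteq> {}"
  shows "2 * card I + card J \<le> card Z"
proof -
  have fin: "finite I" "finite J"
    using assms(1) finite_subset by auto
  have "2 * card I \<le> (\<Sum>i\<in>I. card (A i \<inter> Z))"
    using sum_bounded_below[of I 2 "\<lambda>i. card (A i \<inter> Z)"] assms(4) by (simp add: mult.commute)
  moreover have "card J \<le> (\<Sum>j\<in>J. card (A j \<inter> Z))"
    using sum_bounded_below[of J 1 "\<lambda>j. card (A j \<inter> Z)"] assms(3,5)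
    by (simp add: Suc_le_eq card_gt_0_iff)
  ultimately have "2 * card I + card J \<le> (\<Sum>i\<in>I. card (A i \<inter> Z)) + (\<Sum>j\<in>J. card (A j \<inter> Z))"
    by simp
  also have "\<dots> = (\<Sum>i\<in>I \<union> J. card (A i \<inter> Z))"
    using fin assms(2) by (simp add: sum.union_disjoint)
  also have "\<dots> = card (\<Union>i\<in>I \<union> J. A i \<inter> Z)"
    using fin assms(1,3) parts_disjoint by (intro card_UN_disjoint[symmetric]) auto
  also have "\<dots> \<le> card Z"
    using assms(3) by (intro card_mono) auto
  finally show ?thesis .
qed

lemma part_meets_top_twice:
  assumes "i < length P" "0 < P ! i" "A i \<inter> {M<..n} = {}"
    and "int M + top_sum (int (part_sum - n)) (P ! i - 1) < int part_sum"
  shows "2 \<le> card (A i \<inter> {part_sum - n..n})"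
proof (rule ccontr)
  define c where "c = part_sum - n"
  assume "\<not> ?thesis"
  then have at_most_one: "\<not> 2 \<le> card (A i \<inter> {c..n})"
    by (simp add: c_def)
  have fin: "finite (A i)"
    using assms(1) finite_part by simp
  have "A i \<noteq> {}"
    using assms(2) card_part[OF assms(1)] by auto
  define z where "z = Max (A i)"
  have "z \<in> A i"
    using fin \<open>A i \<noteq> {}\<close> by (simp add: z_def)
  then have "z \<le> M"
    using assms(3) subsetD[OF part_subset[OF assms(1)]] by fastforce
  have "A i - {z} \<subseteq> {..<c}"
  proof
    fix y assume y: "y \<in> A i - {z}"
    then have "y < z"
      using Max_ge[OF fin] z_def by fastforce
    show "y \<in> {..<c}"
    proof (rule ccontr)
      assume "y \<notin> {..<c}"
      then have "{y, z} \<subseteq> A i \<inter> {c..n}"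
        using y \<open>y < z\<close> \<open>z \<in> A i\<close> \<open>z \<le> M\<close> subsetD[OF part_subset[OF assms(1)]] by auto
      then have "2 \<le> card (A i \<inter> {c..n})"
        using card_mono[of "A i \<inter> {c..n}" "{y, z}"] fin \<open>y < z\<close> by simp
      with at_most_one show False ..
    qed
  qed
  then have "int (\<Sum>(A i - {z})) \<le> top_sum (int c) (P ! i - 1)"
    using sum_le_top_sum[of "A i - {z}" c] fin \<open>z \<in> A i\<close> card_part[OF assms(1)] by simp
  moreover have "int part_sum = int z + int (\<Sum>(A i - {z}))"
    using sum.remove[OF fin \<open>z \<in> A i\<close>, of "\<lambda>x. x"] sum_part[OF assms(1)] by simp
  ultimately show False
    using assms(4) \<open>z \<le> M\<close> unfolding c_def by linarith
qed

lemma part_meets_top: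
  assumes "i < length P" "j < length P" "0 < P ! i" "P ! i \<le> P ! j"
    and "top_sum (int (part_sum - n)) (P ! j) < int part_sum"
  shows "A i \<inter> {part_sum - n..n} \<noteq> {}"
proof
  define c where "c = part_sum - n"
  assume "A i \<inter> {part_sum - n..n} = {}"
  then have below: "A i \<subseteq> {1..<c}"
    using subsetD[OF part_subset[OF assms(1)]] by (fastforce simp: c_def)
  moreover have "A i \<noteq> {}"
    using assms(3) card_part[OF assms(1)] by auto
  ultimately have "1 \<le> c"
    by auto
  have "P ! j < c"
  proof (rule ccontr)
    assume "\<not> P ! j < c"
    have "part_sum \<le> \<Sum>{1..<c}"
      using sum_part[OF assms(1)] below sum_mono2[of "{1..<c}" "A i" "\<lambda>x. x"] by simp
    also have "\<dots> < \<Sum>{1..P ! j}"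
      using \<open>1 \<le> c\<close> \<open>\<not> P ! j < c\<close> by (intro sum_strict_mono2[of _ _ c]) auto
    also have "\<dots> \<le> part_sum"
      using sum_atLeastAtMost_card_le[of "A j"] assms(2) finite_part part_subset card_part sum_part
      by fastforce
    finally show False ..
  qed
  have "int part_sum \<le> top_sum (int c) (P ! i)"
    using sum_le_top_sum[of "A i" c] below finite_part card_part sum_part assms(1) by fastforce
  also have "\<dots> \<le> top_sum (int c) (P ! j)"
    using assms(4) \<open>P ! j < c\<close> by (intro top_sum_mono) auto
  also have "\<dots> < int part_sum"
    using assms(5) c_def by simp
  finally show False ..
qed

lemma counting_bound:
  assumes "finite C" "B \<subseteq> C" "e + f \<le> length P"
    and pairs: "\<forall>i<e. A i \<inter> B \<noteq> {} \<and> 2 \<le> card (A i \<inter> C)"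
    and middles: "\<forall>i\<in>{e..<e+f}. A i \<inter> B = {} \<longrightarrow> 2 \<le> card (A i \<inter> C)"
    and late: "V \<subseteq> {e+f..<length P}" "\<forall>i\<in>V. A i \<inter> C \<noteq> {}"
  obtains a where "a \<le> f" "e + a \<le> card B" "2 * e + 2 * f + card V \<le> card C + a"
proof -
  define X where "X = {i\<in>{e..<e+f}. A i \<inter> B \<noteq> {}}"
  have "X \<subseteq> {e..<e+f}"
    by (auto simp: X_def)
  then have "finite X"
    by (rule finite_subset) simp
  have "card X \<le> f"
    using card_mono[OF _ \<open>X \<subseteq> {e..<e+f}\<close>] by simp
  moreover have "e + card X \<le> card B"
  proof -
    have "card ({..<e} \<union> X) = e + card X"
      using \<open>X \<subseteq> {e..<e+f}\<close> \<open>finite X\<close> by (subst card_Un_disjoint) auto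
    moreover have "2 * card ({} :: nat set) + card ({..<e} \<union> X) \<le> card B"
      by (rule card_parts_meeting_le)
        (use assms(1-3) finite_subset pairs \<open>X \<subseteq> {e..<e+f}\<close> in \<open>auto simp: X_def\<close>)
    ultimately show ?thesis
      by simp
  qed
  moreover have "2 * e + 2 * f + card V \<le> card C + card X"
  proof -
    have "2 * card ({..<e} \<union> ({e..<e+f} - X)) + card (X \<union> V) \<le> card C"
      by (intro card_parts_meeting_le ballI)
        (use assms(1-3) pairs middles late \<open>X \<subseteq> {e..<e+f}\<close> in \<open>auto simp: X_def\<close>)
    moreover have "card ({..<e} \<union> ({e..<e+f} - X)) = e + (f - card X)"
      using \<open>X \<subseteq> {e..<e+f}\<close> \<open>finite X\<close> by (subst card_Un_disjoint) (auto simp: card_Diff_subset)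
    moreover have "card (X \<union> V) = card X + card V"
    proof -
      have "{e..<e+f} \<inter> {e+f..<length P} = {}"
        by auto
      then have "X \<inter> V = {}"
        using \<open>X \<subseteq> {e..<e+f}\<close> late(1) by blast
      then show ?thesis
        using \<open>finite X\<close> finite_subset[OF late(1)] by (simp add: card_Un_disjoint)
    qed
    ultimately show ?thesis
      using \<open>card X \<le> f\<close> by simp
  qed
  ultimately show ?thesis
    by (rule that)
qed

lemma late_parts_meeting_top_le_capacity:
  assumes "e + f \<le> length P" "\<forall>i<e. P ! i = 2" "\<forall>i\<in>{e..<e+f}. P ! i = p" "0 < p"
    and "part_sum = 2 * M" "n < part_sum" "M < n"
    and "int M + top_sum (int (part_sum - n)) (p - 1) < int part_sum"
    and "V \<subseteq> {e+f..<length P}" "\<forall>i\<in>V. A i \<inter> {part_sum - n..n} \<noteq> {}"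
  shows "int (card V) \<le> remaining_capacity (int (card {part_sum - n..n}) - 2 * int e) (int f)"
proof -
  have "{M<..n} \<subseteq> {part_sum - n..n}"
    using assms(5) by auto
  moreover have "\<forall>i<e. A i \<inter> {M<..n} \<noteq> {} \<and> 2 \<le> card (A i \<inter> {part_sum - n..n})"
    using pair_part_meets_upper_half assms(1,2,5) card_part by (simp add: Int_absorb2)
  moreover have "\<forall>i\<in>{e..<e+f}. A i \<inter> {M<..n} = {} \<longrightarrow> 2 \<le> card (A i \<inter> {part_sum - n..n})"
    using part_meets_top_twice assms(1,3,4,8) by simp
  ultimately obtain a where "a \<le> f" "e + a \<le> card {M<..n}"
    and count: "2 * e + 2 * f + card V \<le> card {part_sum - n..n} + a"
    by (rule counting_bound[OF finite_atLeastAtMost _ assms(1) _ _ assms(9,10)])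
  have card_top: "card {part_sum - n..n} = 2 * card {M<..n} + 1"
    using assms(5-7) by simp
  define K where "K = int (card {M<..n}) - int e"
  from card_top count have "int (2 * e + 2 * f + card V) \<le> int (2 * card {M<..n} + 1 + a)"
    by (simp only: of_nat_le_iff)
  then have "2 * int f + int (card V) \<le> 2 * K + 1 + int a"
    unfolding K_def by simp
  moreover have "int a \<le> K"
    unfolding K_def using \<open>e + a \<le> card {M<..n}\<close> by linarith
  moreover have "int (card {part_sum - n..n}) - 2 * int e = 2 * K + 1"
    unfolding K_def using card_top by simp
  ultimately show ?thesis
    using le_remaining_capacity[of "int a" "int f" K "int (card V)"] \<open>a \<le> f\<close> by (simp only: of_nat_le_iff)
qed

end

theorem mainTheorem2:
  fixes n k e f p :: nat and P :: "nat list" and s :: int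
  assumes "0 < k" and "k < n"
    and s_def: "s = int (n * (n + 1)) div int (2 * k)"
    and "int (2 * k) dvd int (n * (n + 1))" and "even s"
    and "ascending_partition n k P"
    and "0 < e" and "0 < f" and "3 \<le> p"
    and "\<forall>i<e. P ! i = 2"
    and "\<forall>i. e \<le> i \<and> i < e + f \<longrightarrow> P ! i = p"
    and "\<forall>i. e + f \<le> i \<and> i < k \<longrightarrow> P ! i > p"
    and "e + f \<le> k"
  defines "c \<equiv> s - int n"
  defines "h \<equiv> int (card {x \<in> {1..n}. int x \<ge> c}) - 2 * int e"
  defines "m \<equiv> s div 2"
  defines "hup \<equiv> \<lceil>real_of_int h / 2\<rceil>"
  defines "hlo \<equiv> \<lfloor>real_of_int h / 2\<rfloor>"
  defines "g \<equiv> (if int f \<le> hlo then h - int f else hup - 2 * (int f - hlo))"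
  assumes "m + (\<Sum>i\<in>{c - int p + 1..c - 1}. i) < s"
    and "g < 0 \<or>
         (g \<ge> 0 \<and> e + f + nat g < k \<and>
          (\<Sum>i\<in>{c - int (P ! (e + f + nat g))..c - 1}. i) < s)"
  shows "\<not> equitable n P"
proof
  assume "equitable n P"
  then obtain A where "equitable_partition n P A"
    by (auto simp: equitable_iff_ex_equitable_partition)
  then interpret equitable_partition n P A .
  have len: "length P = k" and "sorted P"
    using assms(6) by (simp_all add: ascending_partition_def)
  have parts_ge_2: "\<forall>i<length P. 2 \<le> P ! i"
  proof (intro allI impI)
    fix i
    assume "i < length P"
    then have "P ! 0 \<le> P ! i"
      using sorted_nth_mono[OF \<open>sorted P\<close>, of 0 i] by simp
    then show "2 \<le> P ! i"
      using assms(7,10) by simp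
  qed
  have "int (n * (n + 1)) = int (2 * k) * int part_sum"
    using double_length_mult_part_sum len by (metis of_nat_mult)
  then have s: "s = int part_sum"
    using assms(1) by (simp add: s_def)
  obtain M where M: "part_sum = 2 * M"
    using assms(5) s by (auto elim: evenE)
  have "n < part_sum" "part_sum < 2 * n"
    using greatest_less_part_sum parts_ge_2 part_sum_less_double[of 0] assms(1,2,7,10) len by auto
  then have c: "c = int (part_sum - n)" and top: "{x \<in> {1..n}. int x \<ge> c} = {part_sum - n..n}"
    using s by (auto simp: c_def)
  have p_bound: "int M + top_sum (int (part_sum - n)) (p - 1) < int part_sum"
  proof -
    have "m = int M"
      unfolding m_def s M by simp
    moreover have "{c - int p + 1..c - 1} = {int (part_sum - n) - int (p - 1)..int (part_sum - n) - 1}"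
      unfolding c using assms(9) by simp
    ultimately show ?thesis
      using assms(20) unfolding top_sum_def s[symmetric] by (simp only:)
  qed
  have shape: "e + f \<le> length P" "\<forall>i\<in>{e..<e+f}. P ! i = p" "0 < p"
    using assms(9,11,13) len by auto
  have "g = remaining_capacity (int (card {part_sum - n..n}) - 2 * int e) (int f)"
    unfolding g_def hlo_def hup_def h_def top remaining_capacity_def ..
  then have capacity: "int (card V) \<le> g"
    if "V \<subseteq> {e+f..<length P}" "\<forall>i\<in>V. A i \<inter> {part_sum - n..n} \<noteq> {}" for V
    using late_parts_meeting_top_le_capacity[OF shape(1) assms(10) shape(2,3) M
        \<open>n < part_sum\<close> _ p_bound that] \<open>part_sum < 2 * n\<close> M by simp
  define j where "j = e + f + nat g"
  have "0 \<le> g"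
    using capacity[of "{}"] by simp
  then have "j < k" and q_sum: "(\<Sum>i\<in>{c - int (P ! j)..c - 1}. i) < s"
    using assms(21) unfolding j_def by auto
  have q_bound: "top_sum (int (part_sum - n)) (P ! j) < int part_sum"
    using q_sum unfolding top_sum_def c s .
  have "\<forall>i\<in>{e+f..j}. A i \<inter> {part_sum - n..n} \<noteq> {}"
  proof
    fix i
    assume "i \<in> {e+f..j}"
    then have "i < length P" "P ! i \<le> P ! j"
      using \<open>j < k\<close> len sorted_nth_mono[OF \<open>sorted P\<close>, of i j] by auto
    moreover have "0 < P ! i"
      using parts_ge_2 \<open>i < length P\<close> by fastforce
    ultimately show "A i \<inter> {part_sum - n..n} \<noteq> {}"
      using part_meets_top[of i j] \<open>j < k\<close> len q_bound by simp
  qed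
  moreover have "{e+f..j} \<subseteq> {e+f..<length P}"
    using \<open>j < k\<close> len by auto
  ultimately have "int (card {e+f..j}) \<le> g"
    using capacity by blast
  then show False
    using \<open>0 \<le> g\<close> by (simp add: j_def)
qed

end
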